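(* Let $\mathcal{K}$ be a convex cone in $\mathbb{R}^d$ and $F$ a Legendre function with domain $\mathcal{K}$. Let $\Pi^\dagger_{\mathrm{all}}=\mathcal{K}^{\mathcal{X}}$ and $\pi_0\in\Pi^\dagger_{\mathrm{all}}$. Suppose that for any $p,q\in\mathcal{K}$ and weights $\lambda_1,\lambda_2>0$, the point $c^*$ defined by $\nabla F(c^* )=\frac{\lambda_1\nabla F(p)+\lambda_2\nabla F(q)}{\lambda_1+\lambda_2}$ lies in $\mathcal{K}$. Then the minimizer $\overline\pi$ of $\pi\mapsto\mathbb{E}_{x\sim\mathcal{D}_{\mathcal{X}}}[\mathsf{B}_F(\pi(x)\parallel\pi_0(x))]$ over the linear subspace $\mathcal{C}^{\dagger\dagger}_{\mathrm{coh}}$ lies in $\mathcal{C}^\dagger_{\mathrm{coh}}=\mathcal{C}^{\dagger\dagger}_{\mathrm{coh}}\cap\Pi^\dagger_{\mathrm{all}}$.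
   Context: $\mathcal{X}$ finite; $\mathcal{D}_{\mathcal{X}}$ a full-support distribution on $\mathcal{X}$; $\Phi\colon\mathcal{X}\to\mathcal{X}$ an involution; $\mathcal{C}^{\dagger\dagger}_{\mathrm{coh}}=\{\pi\colon\mathcal{X}\to\mathbb{R}^d:\pi(x)=\pi(\Phi(x))\ \forall x\}$. $\mathsf{B}_F(p\parallel q)=F(p)-F(q)-\langle\nabla F(q),p-q\rangle$. A Legendre function is proper, closed, convex, differentiable on the interior $\Omega$ of its domain, with $\nabla F\colon\Omega\to\mathrm{int}(\mathrm{dom}F^* )$ a bijection. *)

theory Defs
  imports "HOL-Analysis.Analysis"
begin

text \<open>Convex cone: closed under addition-free convex combinations and positive scaling
  (the apex 0 need not belong to it, e.g. the open positive orthant).\<close>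
definition pos_cone :: "'a::real_vector set \<Rightarrow> bool" where
  "pos_cone K \<longleftrightarrow> (\<forall>x\<in>K. \<forall>c::real. c > 0 \<longrightarrow> c *\<^sub>R x \<in> K)"

definition convex_cone_pos :: "'a::real_vector set \<Rightarrow> bool" where
  "convex_cone_pos K \<longleftrightarrow> convex K \<and> pos_cone K"

definition grad :: "('a::euclidean_space \<Rightarrow> real) \<Rightarrow> 'a \<Rightarrow> 'a" where
  "grad F x = (SOME g. (F has_derivative (\<lambda>h. g \<bullet> h)) (at x))"

text \<open>Effective domain of the convex conjugate of the extended function that equals
  F on K and +infinity outside K.\<close>
definition conj_dom :: "('a::euclidean_space \<Rightarrow> real) \<Rightarrow> 'a set \<Rightarrow> 'a set" where
  "conj_dom F K = {y. \<exists>M. \<forall>x\<in>K. y \<bullet> x - F x \<le> M}"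

definition legendre :: "('a::euclidean_space \<Rightarrow> real) \<Rightarrow> 'a set \<Rightarrow> bool" where
  "legendre F K \<longleftrightarrow>
     K \<noteq> {} \<and> convex K \<and> convex_on K F \<and>
     closed {(x, t::real). x \<in> K \<and> F x \<le> t} \<and>
     (\<forall>x\<in>interior K. F differentiable (at x)) \<and>
     bij_betw (grad F) (interior K) (interior (conj_dom F K))"

definition bregman :: "('a::euclidean_space \<Rightarrow> real) \<Rightarrow> 'a \<Rightarrow> 'a \<Rightarrow> real" where
  "bregman F p q = F p - F q - grad F q \<bullet> (p - q)"

text \<open>Expected Bregman divergence E_{x~D}[B_F(f x || f0 x)], as an extended real:
  it is +infinity as soon as some f x lies outside the domain K (D has full support).\<close>
definition exp_bregman ::
  "('a::euclidean_space \<Rightarrow> real) \<Rightarrow> 'a set \<Rightarrow> ('x::finite \<Rightarrow> real) \<Rightarrow> ('x \<Rightarrow> 'a) \<Rightarrow> ('x \<Rightarrow> 'a) \<Rightarrow> ereal" where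
  "exp_bregman F K D f0 f =
     (if \<forall>x. f x \<in> K then ereal (\<Sum>x\<in>UNIV. D x * bregman F (f x) (f0 x)) else \<infinity>)"

definition coh2 :: "('x \<Rightarrow> 'x) \<Rightarrow> ('x \<Rightarrow> 'a) set" where
  "coh2 \<Phi> = {f. \<forall>x. f x = f (\<Phi> x)}"

end

theory Submission
  imports Defs
begin

text \<open>For a coherent \<pi>, pairing x with \<Phi> x rewrites the objective as half the sum over x of the
  two-point objectives D x B(\<pi> x || \<pi>_0 x) + D (\<Phi> x) B(\<pi> x || \<pi>_0 (\<Phi> x)). By the three-point
  identity each of these is minimised over K by the Bregman centroid, the point whose gradient is
  the D-weighted mean of the two gradients at \<pi>_0 x and \<pi>_0 (\<Phi> x). That mean lies in the convex set
  int(dom F*), so the Legendre bijection puts the centroid in int K. The field of centroids is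
  coherent and has finite objective; hence every minimiser has finite objective, i.e. values in K.\<close>

lemma linear_functional_eq_inner:
  fixes f :: "'a::euclidean_space \<Rightarrow> real"
  assumes "linear f"
  shows "f = (\<lambda>h. (\<Sum>i\<in>Basis. f i *\<^sub>R i) \<bullet> h)"
proof
  fix h
  have "f h = (\<Sum>i\<in>Basis. (h \<bullet> i) * (f i \<bullet> 1))"
    using Linear_Algebra.linear_componentwise[OF assms, of h 1] by simp
  also have "\<dots> = (\<Sum>i\<in>Basis. f i *\<^sub>R i) \<bullet> h"
    by (simp add: inner_sum_right inner_commute mult.commute)
  finally show "f h = (\<Sum>i\<in>Basis. f i *\<^sub>R i) \<bullet> h" .
qed

lemma has_derivative_grad:
  fixes F :: "'a::euclidean_space \<Rightarrow> real"
  assumes "F differentiable (at x)"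
  shows "(F has_derivative (\<lambda>h. grad F x \<bullet> h)) (at x)"
proof -
  from assms obtain F' where "(F has_derivative F') (at x)"
    unfolding differentiable_def by blast
  then have "\<exists>g. (F has_derivative (\<lambda>h. g \<bullet> h)) (at x)"
    using linear_functional_eq_inner[OF has_derivative_linear] by metis
  then show ?thesis
    unfolding grad_def by (rule someI_ex)
qed

lemma convex_on_has_derivative_above_tangent:
  fixes F :: "'a::real_normed_vector \<Rightarrow> real"
  assumes cvx: "convex_on K F" and c: "c \<in> K" and x: "x \<in> K"
    and deriv: "(F has_derivative F') (at c)"
  shows "F' (x - c) \<le> F x - F c"
proof -
  define g where "g t = F (c + t *\<^sub>R (x - c))" for t
  have "((\<lambda>t. c + t *\<^sub>R (x - c)) has_derivative (\<lambda>t. t *\<^sub>R (x - c))) (at 0)"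
    by (auto intro!: derivative_eq_intros)
  moreover have "(F has_derivative F') (at (c + 0 *\<^sub>R (x - c)))"
    using deriv by simp
  ultimately have "(g has_derivative (\<lambda>t. F' (t *\<^sub>R (x - c)))) (at 0)"
    unfolding g_def by (rule has_derivative_compose)
  moreover have "(\<lambda>t. F' (t *\<^sub>R (x - c))) = (*) (F' (x - c))"
    using has_derivative_linear[OF deriv] by (auto simp: linear_scale)
  ultimately have "(g has_field_derivative F' (x - c)) (at 0)"
    by (simp add: has_field_derivative_def)
  then have "((\<lambda>t. (g t - g 0) / t) \<longlongrightarrow> F' (x - c)) (at_right 0)"
    using has_field_derivative_at_within[of g _ 0 "{0<..}"] by (simp add: has_field_derivative_iff)
  moreover have "\<forall>\<^sub>F t in at_right 0. (g t - g 0) / t \<le> F x - F c"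
    using eventually_at_right_real[of 0 1]
  proof (rule eventually_mono)
    fix t :: real assume t: "t \<in> {0<..<1}"
    have "g t = F ((1 - t) *\<^sub>R c + t *\<^sub>R x)"
      by (simp add: g_def algebra_simps)
    also have "\<dots> \<le> (1 - t) * F c + t * F x"
      using convex_onD[OF cvx, of t c x] c x t by simp
    finally show "(g t - g 0) / t \<le> F x - F c"
      using t by (simp add: g_def field_simps)
  qed simp
  ultimately show ?thesis
    by (rule tendsto_upperbound) simp
qed

lemma bregman_nonneg:
  assumes "legendre F K" and "q \<in> interior K" and "p \<in> K"
  shows "0 \<le> bregman F p q"
  using assms interior_subset
    convex_on_has_derivative_above_tangent[OF _ _ _ has_derivative_grad, of K F q p]
  unfolding legendre_def bregman_def by auto

lemma bregman_three_point:
  assumes "(l1 + l2) *\<^sub>R grad F c = l1 *\<^sub>R grad F p + l2 *\<^sub>R grad F q"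
  shows "l1 * bregman F z p + l2 * bregman F z q
     = (l1 + l2) * bregman F z c + l1 * bregman F c p + l2 * bregman F c q"
proof -
  have "(l1 + l2) * (grad F c \<bullet> v) = l1 * (grad F p \<bullet> v) + l2 * (grad F q \<bullet> v)" for v
    using arg_cong[OF assms, of "\<lambda>w. w \<bullet> v"] by (simp add: inner_add_left)
  from this[of "z - c"] show ?thesis
    unfolding bregman_def by (simp add: algebra_simps inner_diff_right)
qed

lemma convex_conj_dom: "convex (conj_dom F K)"
  unfolding convex_alt conj_dom_def
proof clarify
  fix y1 y2 M1 M2 and u :: real
  assume y1: "\<forall>x\<in>K. y1 \<bullet> x - F x \<le> M1" and y2: "\<forall>x\<in>K. y2 \<bullet> x - F x \<le> M2"
    and u: "0 \<le> u" "u \<le> 1"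
  show "\<exists>M. \<forall>x\<in>K. ((1 - u) *\<^sub>R y1 + u *\<^sub>R y2) \<bullet> x - F x \<le> M"
  proof (intro exI ballI)
    fix x assume x: "x \<in> K"
    have "((1 - u) *\<^sub>R y1 + u *\<^sub>R y2) \<bullet> x - F x = (1 - u) * (y1 \<bullet> x - F x) + u * (y2 \<bullet> x - F x)"
      by (simp add: algebra_simps inner_add_left)
    also have "\<dots> \<le> (1 - u) * M1 + u * M2"
      using y1 y2 x u by (intro add_mono mult_left_mono) auto
    finally show "((1 - u) *\<^sub>R y1 + u *\<^sub>R y2) \<bullet> x - F x \<le> (1 - u) * M1 + u * M2" .
  qed
qed

definition bregman_centroid :: "('a::euclidean_space \<Rightarrow> real) \<Rightarrow> 'a set \<Rightarrow> real \<Rightarrow> 'a \<Rightarrow> real \<Rightarrow> 'a \<Rightarrow> 'a"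
  where "bregman_centroid F K l1 p l2 q =
    inv_into (interior K) (grad F) ((1 / (l1 + l2)) *\<^sub>R (l1 *\<^sub>R grad F p + l2 *\<^sub>R grad F q))"

lemma bregman_centroid_commute: "bregman_centroid F K l1 p l2 q = bregman_centroid F K l2 q l1 p"
  unfolding bregman_centroid_def by (simp add: add.commute)

lemma legendre_grad_mean_in_grad_image:
  assumes leg: "legendre F K" and p: "p \<in> interior K" and q: "q \<in> interior K"
    and l: "l1 > 0" "l2 > 0"
  shows "(1 / (l1 + l2)) *\<^sub>R (l1 *\<^sub>R grad F p + l2 *\<^sub>R grad F q) \<in> grad F ` interior K"
proof -
  have bij: "bij_betw (grad F) (interior K) (interior (conj_dom F K))"
    using leg unfolding legendre_def by blast
  then have gp: "grad F p \<in> interior (conj_dom F K)" and gq: "grad F q \<in> interior (conj_dom F K)"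
    using p q bij_betwE by blast+
  have "(1 / (l1 + l2)) *\<^sub>R (l1 *\<^sub>R grad F p + l2 *\<^sub>R grad F q)
      = (l1 / (l1 + l2)) *\<^sub>R grad F p + (l2 / (l1 + l2)) *\<^sub>R grad F q"
    by (simp add: scaleR_add_right)
  moreover have "l1 / (l1 + l2) + l2 / (l1 + l2) = 1"
    using l by (simp flip: add_divide_distrib)
  ultimately have "(1 / (l1 + l2)) *\<^sub>R (l1 *\<^sub>R grad F p + l2 *\<^sub>R grad F q) \<in> interior (conj_dom F K)"
    using convexD[OF convex_interior[OF convex_conj_dom] gp gq, of "l1 / (l1 + l2)" "l2 / (l1 + l2)"] l
    by simp
  then show ?thesis
    using bij by (simp add: bij_betw_def)
qed

lemma bregman_centroid_in_interior:
  assumes "legendre F K" and "p \<in> interior K" and "q \<in> interior K" and "l1 > 0" "l2 > 0"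
  shows "bregman_centroid F K l1 p l2 q \<in> interior K"
  using legendre_grad_mean_in_grad_image[OF assms]
  unfolding bregman_centroid_def by (rule inv_into_into)

lemma grad_bregman_centroid:
  assumes "legendre F K" and "p \<in> interior K" and "q \<in> interior K" and "l1 > 0" "l2 > 0"
  shows "(l1 + l2) *\<^sub>R grad F (bregman_centroid F K l1 p l2 q) = l1 *\<^sub>R grad F p + l2 *\<^sub>R grad F q"
  using f_inv_into_f[OF legendre_grad_mean_in_grad_image[OF assms]] \<open>l1 > 0\<close> \<open>l2 > 0\<close>
  unfolding bregman_centroid_def by simp

lemma bregman_centroid_minimal:
  assumes leg: "legendre F K" and "p \<in> interior K" and "q \<in> interior K" and l: "l1 > 0" "l2 > 0"
    and z: "z \<in> K"
  defines "c \<equiv> bregman_centroid F K l1 p l2 q"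
  shows "l1 * bregman F c p + l2 * bregman F c q \<le> l1 * bregman F z p + l2 * bregman F z q"
proof -
  have "0 \<le> (l1 + l2) * bregman F z c"
    using bregman_nonneg[OF leg bregman_centroid_in_interior[OF assms(1-5)] z] l
    unfolding c_def by simp
  then show ?thesis
    using bregman_three_point[OF grad_bregman_centroid[OF assms(1-5)], of z] unfolding c_def
    by linarith
qed

lemma sum_coherent_involution:
  fixes \<Phi> :: "'x::finite \<Rightarrow> 'x" and w :: "'x \<Rightarrow> 'a \<Rightarrow> real"
  assumes invol: "\<forall>x. \<Phi> (\<Phi> x) = x" and f: "f \<in> coh2 \<Phi>"
  shows "2 * (\<Sum>x\<in>UNIV. w x (f x)) = (\<Sum>x\<in>UNIV. w x (f x) + w (\<Phi> x) (f x))"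
proof -
  have "bij \<Phi>"
    using invol by (metis bij_betw_byWitness subset_UNIV)
  then have "(\<Sum>x\<in>UNIV. w x (f x)) = (\<Sum>x\<in>UNIV. w (\<Phi> x) (f (\<Phi> x)))"
    by (rule sum.reindex_bij_betw[symmetric])
  also have "\<dots> = (\<Sum>x\<in>UNIV. w (\<Phi> x) (f x))"
    using f unfolding coh2_def by simp
  finally show ?thesis
    by (simp add: sum.distrib)
qed

lemma exp_bregman_finite_iff:
  "exp_bregman F K D f0 f < \<infinity> \<longleftrightarrow> (\<forall>x. f x \<in> K)"
  unfolding exp_bregman_def by simp

definition centroid_field ::
    "('a::euclidean_space \<Rightarrow> real) \<Rightarrow> 'a set \<Rightarrow> ('x \<Rightarrow> real) \<Rightarrow> ('x \<Rightarrow> 'x) \<Rightarrow> ('x \<Rightarrow> 'a) \<Rightarrow> 'x \<Rightarrow> 'a"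
  where "centroid_field F K D \<Phi> f0 x = bregman_centroid F K (D x) (f0 x) (D (\<Phi> x)) (f0 (\<Phi> x))"

lemma centroid_field_coherent:
  assumes "\<forall>x. \<Phi> (\<Phi> x) = x"
  shows "centroid_field F K D \<Phi> f0 \<in> coh2 \<Phi>"
  using assms unfolding coh2_def centroid_field_def by (simp add: bregman_centroid_commute)

lemma centroid_field_in_interior:
  assumes "legendre F K" and "\<forall>x. D x > 0" and "\<forall>x. f0 x \<in> interior K"
  shows "centroid_field F K D \<Phi> f0 x \<in> interior K"
  using bregman_centroid_in_interior assms unfolding centroid_field_def by blast

lemma exp_bregman_centroid_field_le:
  fixes \<Phi> :: "'x::finite \<Rightarrow> 'x"
  assumes D_pos: "\<forall>x. D x > 0" and invol: "\<forall>x. \<Phi> (\<Phi> x) = x"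
    and leg: "legendre F K" and f0: "\<forall>x. f0 x \<in> interior K" and f: "f \<in> coh2 \<Phi>"
  shows "exp_bregman F K D f0 (centroid_field F K D \<Phi> f0) \<le> exp_bregman F K D f0 f"
proof (cases "\<forall>x. f x \<in> K")
  case True
  let ?c = "centroid_field F K D \<Phi> f0"
  let ?w = "\<lambda>x y. D x * bregman F y (f0 x)"
  have "2 * (\<Sum>x\<in>UNIV. D x * bregman F (?c x) (f0 x)) \<le> 2 * (\<Sum>x\<in>UNIV. D x * bregman F (f x) (f0 x))"
    unfolding sum_coherent_involution[OF invol centroid_field_coherent[OF invol], where w = ?w]
      sum_coherent_involution[OF invol f, where w = ?w]
    using bregman_centroid_minimal[OF leg] f0 D_pos True
    unfolding centroid_field_def by (intro sum_mono) blast
  moreover have "\<forall>x. ?c x \<in> K"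
    using centroid_field_in_interior[OF leg D_pos f0] interior_subset by blast
  ultimately show ?thesis
    using True by (simp add: exp_bregman_def)
next
  case False
  then have "exp_bregman F K D f0 f = \<infinity>"
    by (simp add: exp_bregman_def)
  then show ?thesis
    by simp
qed

theorem theorem12:
  fixes K :: "(real^'d) set" and F :: "real^'d \<Rightarrow> real"
    and D :: "'x::finite \<Rightarrow> real" and \<Phi> :: "'x \<Rightarrow> 'x" and \<pi>\<^sub>0 :: "'x \<Rightarrow> real^'d"
  assumes D_pos: "\<forall>x. D x > 0" and D_sum: "(\<Sum>x\<in>UNIV. D x) = 1"
    and invol: "\<forall>x. \<Phi> (\<Phi> x) = x"
    and cone: "convex_cone_pos K"
    and leg: "legendre F K"
    and \<pi>\<^sub>0: "\<forall>x. \<pi>\<^sub>0 x \<in> interior K"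
    and centroid: "\<forall>p\<in>interior K. \<forall>q\<in>interior K. \<forall>l1 l2::real. l1 > 0 \<longrightarrow> l2 > 0 \<longrightarrow>
        inv_into (interior K) (grad F)
          ((1 / (l1 + l2)) *\<^sub>R (l1 *\<^sub>R grad F p + l2 *\<^sub>R grad F q)) \<in> K"
  shows "(\<exists>fb\<in>coh2 \<Phi>. \<forall>f\<in>coh2 \<Phi>. exp_bregman F K D \<pi>\<^sub>0 fb \<le> exp_bregman F K D \<pi>\<^sub>0 f)
     \<and> (\<forall>fb\<in>coh2 \<Phi>. (\<forall>f\<in>coh2 \<Phi>. exp_bregman F K D \<pi>\<^sub>0 fb \<le> exp_bregman F K D \<pi>\<^sub>0 f)
           \<longrightarrow> fb \<in> coh2 \<Phi> \<inter> {f. \<forall>x. f x \<in> K})"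
proof -
  let ?c = "centroid_field F K D \<Phi> \<pi>\<^sub>0"
  have c_coh: "?c \<in> coh2 \<Phi>"
    using centroid_field_coherent[OF invol] .
  have c_min: "\<forall>f\<in>coh2 \<Phi>. exp_bregman F K D \<pi>\<^sub>0 ?c \<le> exp_bregman F K D \<pi>\<^sub>0 f"
    using exp_bregman_centroid_field_le[OF D_pos invol leg \<pi>\<^sub>0] by blast
  have c_finite: "exp_bregman F K D \<pi>\<^sub>0 ?c < \<infinity>"
    using centroid_field_in_interior[OF leg D_pos \<pi>\<^sub>0] interior_subset exp_bregman_finite_iff by blast
  show ?thesis
  proof (intro conjI ballI impI)
    show "\<exists>fb\<in>coh2 \<Phi>. \<forall>f\<in>coh2 \<Phi>. exp_bregman F K D \<pi>\<^sub>0 fb \<le> exp_bregman F K D \<pi>\<^sub>0 f"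
      using c_coh c_min by blast
  next
    fix g assume g: "g \<in> coh2 \<Phi>" and g_min: "\<forall>f\<in>coh2 \<Phi>. exp_bregman F K D \<pi>\<^sub>0 g \<le> exp_bregman F K D \<pi>\<^sub>0 f"
    have "exp_bregman F K D \<pi>\<^sub>0 g < \<infinity>"
      using g_min c_coh c_finite by (meson le_less_trans)
    then show "g \<in> coh2 \<Phi> \<inter> {f. \<forall>x. f x \<in> K}"
      using g exp_bregman_finite_iff by blast
  qed
qed

end
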